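(* Let $\beta\in\mathcal{A}$ and $\lambda\in N_\beta$ with $\lambda_\beta=-1$ and $\sigma_X(-\mathcal{A}\lambda)<\infty$. Then the dual cone of $C_X(\mathcal{A},\lambda)$ (in $\mathbb{R}^{\mathcal{A}}$ with the standard inner product) is \[C_X(\mathcal{A},\lambda)^*=\Big\{v\in\mathbb{R}^{\mathcal{A}}_+:\ \exp(\sigma_X(-\mathcal{A}\lambda))\prod_{\alpha\in\lambda^+}v_\alpha^{\lambda_\alpha}\ge v_\beta\Big\}.\]
   Context: $X\subset\mathbb{R}^n$ is a nonempty closed convex set and $\mathcal{A}\subset\mathbb{R}^n$ a nonempty finite set. $\mathbb{R}^{\mathcal{A}}$ denotes real vectors indexed by $\mathcal{A}$. $\mathcal{A}\nu=\sum_\alpha\alpha\nu_\alpha$. $\sigma_X(y)=\sup\{y^Tx:x\in X\}$. $N_\beta=\{\nu\in\mathbb{R}^{\mathcal{A}}:\nu_\alpha\ge0\ \forall\alpha\neq\beta,\ \sum_\alpha\nu_\alpha=0\}$. $\lambda^+=\{\alpha:\lambda_\alpha>0\}$. For $\lambda\in N_\beta$ with $\lambda_\beta=-1$ and $\sigma_X(-\mathcal{A}\lambda)<\infty$, the $\lambda$-witnessed AGE cone is $C_X(\mathcal{A},\lambda)=\{c\in\mathbb{R}^{\mathcal{A}}: c_\alpha\ge0\ \forall\alpha\neq\beta,\ \prod_{\alpha\in\lambda^+}(c_\alpha/\lambda_\alpha)^{\lambda_\alpha}\ge -c_\beta\exp(\sigma_X(-\mathcal{A}\lambda))\}$. The dual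 cone of $K$ is $K^*=\{v:v^Tc\ge0\ \forall c\in K\}$. *)

theory Defs
  imports "HOL-Analysis.Analysis"
begin

text \<open>Vectors in R^A are functions on points of R^n that vanish outside A.\<close>
definition RA :: "(real^'n) set \<Rightarrow> ((real^'n) \<Rightarrow> real) set" where
  "RA A = {c. \<forall>\<alpha>. \<alpha> \<notin> A \<longrightarrow> c \<alpha> = 0}"

definition Amul :: "(real^'n) set \<Rightarrow> ((real^'n) \<Rightarrow> real) \<Rightarrow> real^'n" where
  "Amul A \<nu> = (\<Sum>\<alpha>\<in>A. \<nu> \<alpha> *\<^sub>R \<alpha>)"

text \<open>Support function; meaningful (finite) when the set of values is bounded above.\<close>
definition sigma :: "(real^'n) set \<Rightarrow> real^'n \<Rightarrow> real" where
  "sigma X y = Sup ((\<lambda>x. y \<bullet> x) ` X)"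

definition sigma_finite :: "(real^'n) set \<Rightarrow> real^'n \<Rightarrow> bool" where
  "sigma_finite X y \<longleftrightarrow> bdd_above ((\<lambda>x. y \<bullet> x) ` X)"

definition Nbeta :: "(real^'n) set \<Rightarrow> real^'n \<Rightarrow> ((real^'n) \<Rightarrow> real) set" where
  "Nbeta A \<beta> = {\<nu> \<in> RA A. (\<forall>\<alpha>\<in>A. \<alpha> \<noteq> \<beta> \<longrightarrow> \<nu> \<alpha> \<ge> 0) \<and> (\<Sum>\<alpha>\<in>A. \<nu> \<alpha>) = 0}"

definition pos_supp :: "(real^'n) set \<Rightarrow> ((real^'n) \<Rightarrow> real) \<Rightarrow> (real^'n) set" where
  "pos_supp A lam = {\<alpha> \<in> A. lam \<alpha> > 0}"

definition AGE_cone :: "(real^'n) set \<Rightarrow> (real^'n) set \<Rightarrow> real^'n \<Rightarrow> ((real^'n) \<Rightarrow> real)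
    \<Rightarrow> ((real^'n) \<Rightarrow> real) set" where
  "AGE_cone X A \<beta> lam = {c \<in> RA A. (\<forall>\<alpha>\<in>A. \<alpha> \<noteq> \<beta> \<longrightarrow> c \<alpha> \<ge> 0) \<and>
      (\<Prod>\<alpha>\<in>pos_supp A lam. (c \<alpha> / lam \<alpha>) powr (lam \<alpha>))
        \<ge> - c \<beta> * exp (sigma X (- Amul A lam))}"

definition dual_cone :: "(real^'n) set \<Rightarrow> ((real^'n) \<Rightarrow> real) set \<Rightarrow> ((real^'n) \<Rightarrow> real) set" where
  "dual_cone A K = {v \<in> RA A. \<forall>c\<in>K. (\<Sum>\<alpha>\<in>A. v \<alpha> * c \<alpha>) \<ge> 0}"

end

theory Submission
  imports Defs
begin

text \<open>
  Write \<open>P = \<lambda>\<^sup>+\<close> and \<open>E = exp (\<sigma>\<^sub>X (-\<A>\<lambda>))\<close>; the weights \<open>\<lambda>\<^sub>\<alpha>\<close>, \<open>\<alpha> \<in> P\<close>, sum to 1.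
  If \<open>v \<ge> 0\<close> satisfies \<open>v\<^sub>\<beta> \<le> E \<Prod> v\<^sub>\<alpha>\<^bsup>\<lambda>\<^sub>\<alpha>\<^esup>\<close>, then for every \<open>c\<close> in the cone the weighted
  AM-GM inequality applied to \<open>v\<^sub>\<alpha> c\<^sub>\<alpha> / \<lambda>\<^sub>\<alpha>\<close> gives
  \<open>\<Sum>\<^sub>P v\<^sub>\<alpha> c\<^sub>\<alpha> \<ge> \<Prod> v\<^sub>\<alpha>\<^bsup>\<lambda>\<^sub>\<alpha>\<^esup> \<Prod> (c\<^sub>\<alpha>/\<lambda>\<^sub>\<alpha>)\<^bsup>\<lambda>\<^sub>\<alpha>\<^esup> \<ge> -v\<^sub>\<beta> c\<^sub>\<beta>\<close>, so \<open>v\<close> is in the dual cone.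
  Conversely, pairing a dual vector with unit vectors shows \<open>v \<ge> 0\<close>, and pairing it with
  the boundary point \<open>c\<^sub>\<alpha> = \<lambda>\<^sub>\<alpha> / (v\<^sub>\<alpha> + \<epsilon>)\<close> of the cone yields the product inequality for
  \<open>v + \<epsilon>\<close>; let \<open>\<epsilon> \<rightarrow> 0\<close>.  Only \<open>E > 0\<close> enters.
\<close>

lemma weighted_arith_geom_mean:
  fixes x w :: "'a \<Rightarrow> real"
  assumes "finite S" and w: "\<And>i. i \<in> S \<Longrightarrow> w i > 0" and "sum w S = 1"
    and x: "\<And>i. i \<in> S \<Longrightarrow> x i \<ge> 0"
  shows "(\<Prod>i\<in>S. x i powr w i) \<le> (\<Sum>i\<in>S. w i * x i)"
proof (cases "\<exists>i\<in>S. x i = 0")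
  case True
  then have "(\<Prod>i\<in>S. x i powr w i) = 0"
    using \<open>finite S\<close> by auto
  moreover have "(\<Sum>i\<in>S. w i * x i) \<ge> 0"
    using w x by (intro sum_nonneg) (meson less_imp_le mult_nonneg_nonneg)
  ultimately show ?thesis by simp
next
  case False
  have pos: "\<And>i. i \<in> S \<Longrightarrow> x i > 0"
    using False x by force
  have "S \<noteq> {}"
    using \<open>sum w S = 1\<close> by auto
  have "(\<Sum>i\<in>S. w i * ln (x i)) \<le> ln (\<Sum>i\<in>S. w i *\<^sub>R x i)"
  proof (intro concave_on_sum)
    show "concave_on {0<..} ln" by (simp add: ln_concave)
    show "\<And>i. i \<in> S \<Longrightarrow> x i \<in> {0<..}" using pos by auto
  qed (use assms \<open>S \<noteq> {}\<close> in \<open>auto intro: less_imp_le\<close>)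
  moreover have "(\<Sum>i\<in>S. w i *\<^sub>R x i) > 0"
    using \<open>finite S\<close> \<open>S \<noteq> {}\<close> w pos by (simp add: sum_pos)
  ultimately have "exp (\<Sum>i\<in>S. w i * ln (x i)) \<le> (\<Sum>i\<in>S. w i * x i)"
    using ln_ge_iff by auto
  moreover have "exp (\<Sum>i\<in>S. w i * ln (x i)) = (\<Prod>i\<in>S. exp (w i * ln (x i)))"
    using \<open>finite S\<close> by (simp add: exp_sum)
  moreover have "\<dots> = (\<Prod>i\<in>S. x i powr w i)"
    using pos by (intro prod.cong) (auto simp: powr_def mult.commute dest: pos less_imp_neq)
  ultimately show ?thesis by simp
qed

lemma prod_powr_mult_prod_powr_le_sum:
  fixes v c w :: "'a \<Rightarrow> real"
  assumes "finite P" and w: "\<And>a. a \<in> P \<Longrightarrow> w a > 0" and "sum w P = 1"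
    and v: "\<And>a. a \<in> P \<Longrightarrow> v a \<ge> 0" and c: "\<And>a. a \<in> P \<Longrightarrow> c a \<ge> 0"
  shows "(\<Prod>a\<in>P. v a powr w a) * (\<Prod>a\<in>P. (c a / w a) powr w a) \<le> (\<Sum>a\<in>P. v a * c a)"
proof -
  have "(\<Prod>a\<in>P. v a powr w a) * (\<Prod>a\<in>P. (c a / w a) powr w a)
      = (\<Prod>a\<in>P. (v a * c a / w a) powr w a)"
    by (simp add: prod.distrib[symmetric] powr_mult[symmetric] v c w less_imp_le)
  also have "\<dots> \<le> (\<Sum>a\<in>P. w a * (v a * c a / w a))"
    using assms by (intro weighted_arith_geom_mean) (auto intro!: divide_nonneg_pos)
  also have "\<dots> = (\<Sum>a\<in>P. v a * c a)"
    using w by (intro sum.cong) force+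
  finally show ?thesis .
qed

lemma le_prod_powr_of_le_shifted:
  fixes v w :: "'a \<Rightarrow> real"
  assumes v: "\<And>a. a \<in> P \<Longrightarrow> v a \<ge> 0" and w: "\<And>a. a \<in> P \<Longrightarrow> w a > 0"
    and le: "\<And>e. e > 0 \<Longrightarrow> y \<le> E * (\<Prod>a\<in>P. (v a + e) powr w a)"
  shows "y \<le> E * (\<Prod>a\<in>P. v a powr w a)"
proof (rule tendsto_le[OF trivial_limit_at_right_real])
  show "((\<lambda>e. E * (\<Prod>a\<in>P. (v a + e) powr w a)) \<longlongrightarrow> E * (\<Prod>a\<in>P. v a powr w a)) (at_right 0)"
  proof (intro tendsto_mult tendsto_const tendsto_prod)
    fix a assume "a \<in> P"
    have lim: "((\<lambda>e. v a + e) \<longlongrightarrow> v a + 0) (at_right 0)"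
      by (intro tendsto_add tendsto_const tendsto_ident_at)
    have "\<forall>\<^sub>F e in at_right 0. v a + e \<ge> 0"
      by (rule eventually_mono[OF eventually_at_right_less]) (use v[OF \<open>a \<in> P\<close>] in simp)
    then show "((\<lambda>e. (v a + e) powr w a) \<longlongrightarrow> v a powr w a) (at_right 0)"
      using tendsto_powr'[OF lim tendsto_const, of "w a"] w[OF \<open>a \<in> P\<close>] by simp
  qed
  show "\<forall>\<^sub>F e in at_right 0. y \<le> E * (\<Prod>a\<in>P. (v a + e) powr w a)"
    by (rule eventually_mono[OF eventually_at_right_less]) (rule le)
qed simp

lemma pos_supp_subset: "pos_supp A lam \<subseteq> A"
  by (auto simp: pos_supp_def)

lemma pos_supp_pos: "\<alpha> \<in> pos_supp A lam \<Longrightarrow> lam \<alpha> > 0"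
  by (simp add: pos_supp_def)

lemma not_in_pos_supp: "lam \<beta> = -1 \<Longrightarrow> \<beta> \<notin> pos_supp A lam"
  by (simp add: pos_supp_def)

lemma sum_eq_sum_pos_supp_plus:
  assumes "finite A" and "\<beta> \<in> A" and "lam \<beta> = -1"
    and zero: "\<And>\<alpha>. \<alpha> \<in> A \<Longrightarrow> \<alpha> \<notin> pos_supp A lam \<Longrightarrow> \<alpha> \<noteq> \<beta> \<Longrightarrow> f \<alpha> = 0"
  shows "sum f A = sum f (pos_supp A lam) + f \<beta>"
proof -
  have "finite (pos_supp A lam)"
    using \<open>finite A\<close> pos_supp_subset by (rule finite_subset[rotated])
  have "sum f A = sum f (insert \<beta> (pos_supp A lam))"
    using assms pos_supp_subset by (intro sum.mono_neutral_right) auto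
  also have "\<dots> = sum f (pos_supp A lam) + f \<beta>"
    using \<open>finite (pos_supp A lam)\<close> not_in_pos_supp[of lam \<beta>, OF \<open>lam \<beta> = -1\<close>]
    by (simp add: add.commute)
  finally show ?thesis .
qed

lemma sum_pos_supp_Nbeta:
  assumes "finite A" and "\<beta> \<in> A" and "lam \<in> Nbeta A \<beta>" and "lam \<beta> = -1"
  shows "sum lam (pos_supp A lam) = 1"
proof -
  have "sum lam A = sum lam (pos_supp A lam) + lam \<beta>"
    by (rule sum_eq_sum_pos_supp_plus) (use assms in \<open>force simp: Nbeta_def pos_supp_def\<close>)+
  then show ?thesis
    using assms by (simp add: Nbeta_def)
qed

lemma indicator_in_AGE_cone:
  assumes "\<alpha> \<in> A"
  shows "indicator {\<alpha>} \<in> AGE_cone X A \<beta> lam"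
proof -
  have "- indicator {\<alpha>} \<beta> * exp (sigma X (- Amul A lam)) \<le> 0"
    by (simp add: indicator_def)
  also have "0 \<le> (\<Prod>a\<in>pos_supp A lam. (indicator {\<alpha>} a / lam a) powr lam a)"
    by (intro prod_nonneg) simp
  finally have "- indicator {\<alpha>} \<beta> * exp (sigma X (- Amul A lam))
      \<le> (\<Prod>a\<in>pos_supp A lam. (indicator {\<alpha>} a / lam a) powr lam a)" .
  moreover have "indicator {\<alpha>} \<in> RA A"
    using assms by (auto simp: RA_def indicator_def)
  ultimately show ?thesis
    by (simp add: AGE_cone_def)
qed

lemma dual_cone_AGE_cone_nonneg:
  assumes "finite A" and "v \<in> dual_cone A (AGE_cone X A \<beta> lam)" and "\<alpha> \<in> A"
  shows "v \<alpha> \<ge> 0"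
proof -
  have "0 \<le> (\<Sum>a\<in>A. v a * indicator {\<alpha>} a)"
    using assms indicator_in_AGE_cone[of \<alpha> A X \<beta> lam] by (auto simp: dual_cone_def)
  also have "\<dots> = v \<alpha>"
    using assms by (simp add: indicator_def if_distrib cong: if_cong)
  finally show ?thesis .
qed

lemma prod_powr_pos:
  fixes u w :: "'a \<Rightarrow> real"
  assumes "\<And>a. a \<in> S \<Longrightarrow> u a > 0"
  shows "(\<Prod>a\<in>S. u a powr w a) > 0"
  using assms by (intro prod_pos) (simp add: less_imp_neq[symmetric])

text \<open>The \<open>\<beta>\<close>-entry is chosen so that the defining inequality of the cone holds with equality.\<close>

definition AGE_witness ::
    "(real^'n) set \<Rightarrow> (real^'n) set \<Rightarrow> real^'n \<Rightarrow> ((real^'n) \<Rightarrow> real) \<Rightarrow> ((real^'n) \<Rightarrow> real)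
      \<Rightarrow> ((real^'n) \<Rightarrow> real)" where
  "AGE_witness X A \<beta> lam u = (\<lambda>\<alpha>.
     if \<alpha> \<in> pos_supp A lam then lam \<alpha> / u \<alpha>
     else if \<alpha> = \<beta> then - 1 / (exp (sigma X (- Amul A lam)) * (\<Prod>a\<in>pos_supp A lam. u a powr lam a))
     else 0)"

lemma AGE_witness_in_AGE_cone:
  assumes "\<beta> \<in> A" and "lam \<beta> = -1" and u: "\<And>\<alpha>. \<alpha> \<in> pos_supp A lam \<Longrightarrow> u \<alpha> > 0"
  shows "AGE_witness X A \<beta> lam u \<in> AGE_cone X A \<beta> lam"
proof -
  define c where "c = AGE_witness X A \<beta> lam u"
  define E where "E = exp (sigma X (- Amul A lam))"
  define R where "R = (\<Prod>a\<in>pos_supp A lam. u a powr lam a)"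
  have "R > 0"
    unfolding R_def using u by (rule prod_powr_pos)
  have "(\<Prod>\<alpha>\<in>pos_supp A lam. (c \<alpha> / lam \<alpha>) powr lam \<alpha>)
      = (\<Prod>\<alpha>\<in>pos_supp A lam. 1 / u \<alpha> powr lam \<alpha>)"
  proof (intro prod.cong refl)
    fix \<alpha> assume "\<alpha> \<in> pos_supp A lam"
    then have "c \<alpha> / lam \<alpha> = 1 / u \<alpha>"
      using u[of \<alpha>] pos_supp_pos[of \<alpha> A lam] by (simp add: c_def AGE_witness_def)
    then show "(c \<alpha> / lam \<alpha>) powr lam \<alpha> = 1 / u \<alpha> powr lam \<alpha>"
      using u[OF \<open>\<alpha> \<in> pos_supp A lam\<close>] by (simp add: powr_divide)
  qed
  also have "\<dots> = - c \<beta> * E"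
    using \<open>R > 0\<close> not_in_pos_supp[of lam \<beta>, OF \<open>lam \<beta> = -1\<close>]
    by (simp add: prod_dividef c_def AGE_witness_def E_def R_def)
  finally have "- c \<beta> * E \<le> (\<Prod>\<alpha>\<in>pos_supp A lam. (c \<alpha> / lam \<alpha>) powr lam \<alpha>)"
    by simp
  moreover have "c \<alpha> \<ge> 0" if "\<alpha> \<noteq> \<beta>" for \<alpha>
    using that u pos_supp_pos[of \<alpha> A lam] unfolding c_def AGE_witness_def
    by (auto intro!: divide_nonneg_pos less_imp_le)
  moreover have "c \<in> RA A"
    using \<open>\<beta> \<in> A\<close> pos_supp_subset by (auto simp: RA_def c_def AGE_witness_def)
  ultimately show ?thesis
    by (simp add: AGE_cone_def c_def E_def)
qed

lemma sum_mult_AGE_witness_le: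
  assumes "finite A" and "\<beta> \<in> A" and "lam \<in> Nbeta A \<beta>" and "lam \<beta> = -1"
    and u: "\<And>\<alpha>. \<alpha> \<in> pos_supp A lam \<Longrightarrow> u \<alpha> > 0"
    and v: "\<And>\<alpha>. \<alpha> \<in> pos_supp A lam \<Longrightarrow> v \<alpha> \<le> u \<alpha>"
  shows "(\<Sum>\<alpha>\<in>A. v \<alpha> * AGE_witness X A \<beta> lam u \<alpha>)
    \<le> 1 - v \<beta> / (exp (sigma X (- Amul A lam)) * (\<Prod>\<alpha>\<in>pos_supp A lam. u \<alpha> powr lam \<alpha>))"
proof -
  define c where "c = AGE_witness X A \<beta> lam u"
  have "(\<Sum>\<alpha>\<in>A. v \<alpha> * c \<alpha>) = (\<Sum>\<alpha>\<in>pos_supp A lam. v \<alpha> * c \<alpha>) + v \<beta> * c \<beta>"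
    using assms(1,2,4) by (intro sum_eq_sum_pos_supp_plus) (auto simp: c_def AGE_witness_def)
  also have "(\<Sum>\<alpha>\<in>pos_supp A lam. v \<alpha> * c \<alpha>) \<le> (\<Sum>\<alpha>\<in>pos_supp A lam. lam \<alpha>)"
  proof (intro sum_mono)
    fix \<alpha> assume "\<alpha> \<in> pos_supp A lam"
    then have "lam \<alpha> * (v \<alpha> / u \<alpha>) \<le> lam \<alpha> * 1"
      using u v pos_supp_pos[of \<alpha> A lam] by (intro mult_left_mono) simp_all
    then show "v \<alpha> * c \<alpha> \<le> lam \<alpha>"
      using \<open>\<alpha> \<in> pos_supp A lam\<close> by (simp add: c_def AGE_witness_def mult.commute)
  qed
  also have "(\<Sum>\<alpha>\<in>pos_supp A lam. lam \<alpha>) = 1"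
    using assms(1-4) by (rule sum_pos_supp_Nbeta)
  finally show ?thesis
    using not_in_pos_supp[of lam \<beta>, OF \<open>lam \<beta> = -1\<close>]
      prod_powr_pos[where S="pos_supp A lam" and w=lam, OF u]
    by (simp add: c_def AGE_witness_def)
qed

lemma dual_cone_AGE_cone_le_shifted:
  assumes "finite A" and "\<beta> \<in> A" and "lam \<in> Nbeta A \<beta>" and "lam \<beta> = -1"
    and v: "v \<in> dual_cone A (AGE_cone X A \<beta> lam)" and "e > 0"
  shows "v \<beta> \<le> exp (sigma X (- Amul A lam)) * (\<Prod>\<alpha>\<in>pos_supp A lam. (v \<alpha> + e) powr lam \<alpha>)"
proof -
  define u where "u = (\<lambda>\<alpha>. v \<alpha> + e)"
  define E where "E = exp (sigma X (- Amul A lam))"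
  define R where "R = (\<Prod>\<alpha>\<in>pos_supp A lam. u \<alpha> powr lam \<alpha>)"
  have u: "\<And>\<alpha>. \<alpha> \<in> pos_supp A lam \<Longrightarrow> u \<alpha> > 0"
    using dual_cone_AGE_cone_nonneg[OF \<open>finite A\<close> v] pos_supp_subset \<open>e > 0\<close>
    unfolding u_def by force
  have "E * R > 0"
    using prod_powr_pos[where S="pos_supp A lam" and w=lam, OF u] by (simp add: E_def R_def)
  have "0 \<le> (\<Sum>\<alpha>\<in>A. v \<alpha> * AGE_witness X A \<beta> lam u \<alpha>)"
    using v AGE_witness_in_AGE_cone[where lam=lam and u=u, OF \<open>\<beta> \<in> A\<close> \<open>lam \<beta> = -1\<close> u]
    by (auto simp: dual_cone_def)
  also have "\<dots> \<le> 1 - v \<beta> / (E * R)"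
    unfolding E_def R_def using assms(1-4) u
  proof (rule sum_mult_AGE_witness_le)
    show "v \<alpha> \<le> u \<alpha>" for \<alpha>
      using \<open>e > 0\<close> by (simp add: u_def)
  qed
  finally show ?thesis
    using \<open>E * R > 0\<close> by (simp add: E_def R_def u_def field_simps)
qed

lemma dual_cone_AGE_cone_subset:
  assumes "finite A" and "\<beta> \<in> A" and "lam \<in> Nbeta A \<beta>" and "lam \<beta> = -1"
  shows "dual_cone A (AGE_cone X A \<beta> lam) \<subseteq>
    {v \<in> RA A. (\<forall>\<alpha>\<in>A. v \<alpha> \<ge> 0) \<and>
       exp (sigma X (- Amul A lam)) * (\<Prod>\<alpha>\<in>pos_supp A lam. v \<alpha> powr lam \<alpha>) \<ge> v \<beta>}"
proof
  fix v assume v: "v \<in> dual_cone A (AGE_cone X A \<beta> lam)"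
  have nonneg: "\<And>\<alpha>. \<alpha> \<in> A \<Longrightarrow> v \<alpha> \<ge> 0"
    using dual_cone_AGE_cone_nonneg[OF \<open>finite A\<close> v] .
  have "v \<beta> \<le> exp (sigma X (- Amul A lam)) * (\<Prod>\<alpha>\<in>pos_supp A lam. v \<alpha> powr lam \<alpha>)"
  proof (rule le_prod_powr_of_le_shifted)
    show "\<And>\<alpha>. \<alpha> \<in> pos_supp A lam \<Longrightarrow> v \<alpha> \<ge> 0"
      using nonneg pos_supp_subset by blast
    show "\<And>e. e > 0 \<Longrightarrow> v \<beta> \<le> exp (sigma X (- Amul A lam)) *
        (\<Prod>\<alpha>\<in>pos_supp A lam. (v \<alpha> + e) powr lam \<alpha>)"
      by (rule dual_cone_AGE_cone_le_shifted[OF assms v])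
  qed (rule pos_supp_pos)
  moreover have "v \<in> RA A"
    using v by (simp add: dual_cone_def)
  ultimately show "v \<in> {v \<in> RA A. (\<forall>\<alpha>\<in>A. v \<alpha> \<ge> 0) \<and>
       exp (sigma X (- Amul A lam)) * (\<Prod>\<alpha>\<in>pos_supp A lam. v \<alpha> powr lam \<alpha>) \<ge> v \<beta>}"
    using nonneg by blast
qed

lemma neg_mult_le_mult_of_budget:
  fixes y b E G H :: real
  assumes "0 \<le> y" and "y \<le> E * G" and "- b * E \<le> H" and "0 \<le> G" and "0 \<le> H"
  shows "- y * b \<le> G * H"
proof (cases "b \<ge> 0")
  case True
  then have "- y * b \<le> 0"
    using \<open>0 \<le> y\<close> by simp
  also have "0 \<le> G * H"
    using assms by simp
  finally show ?thesis .
next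
  case False
  then have "- y * b \<le> E * G * (- b)"
    using mult_right_mono[OF \<open>y \<le> E * G\<close>, of "- b"] by simp
  also have "\<dots> = G * (- b * E)"
    by (simp only: mult_ac)
  also have "\<dots> \<le> G * H"
    using assms by (intro mult_left_mono) simp_all
  finally show ?thesis .
qed

lemma sum_mult_AGE_cone_nonneg:
  assumes "finite A" and "\<beta> \<in> A" and "lam \<in> Nbeta A \<beta>" and "lam \<beta> = -1"
    and v: "\<And>\<alpha>. \<alpha> \<in> A \<Longrightarrow> v \<alpha> \<ge> 0"
    and v\<beta>: "v \<beta> \<le> exp (sigma X (- Amul A lam)) * (\<Prod>\<alpha>\<in>pos_supp A lam. v \<alpha> powr lam \<alpha>)"
    and "c \<in> AGE_cone X A \<beta> lam"
  shows "0 \<le> (\<Sum>\<alpha>\<in>A. v \<alpha> * c \<alpha>)"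
proof -
  let ?P = "pos_supp A lam"
  have c: "\<And>\<alpha>. \<alpha> \<in> A \<Longrightarrow> \<alpha> \<noteq> \<beta> \<Longrightarrow> c \<alpha> \<ge> 0"
    and c\<beta>: "- c \<beta> * exp (sigma X (- Amul A lam)) \<le> (\<Prod>\<alpha>\<in>?P. (c \<alpha> / lam \<alpha>) powr lam \<alpha>)"
    using \<open>c \<in> AGE_cone X A \<beta> lam\<close> by (auto simp: AGE_cone_def)
  have P: "finite ?P" "?P \<subseteq> A" "\<beta> \<notin> ?P"
    using \<open>finite A\<close> pos_supp_subset not_in_pos_supp[of lam \<beta>, OF \<open>lam \<beta> = -1\<close>]
    by (auto intro: finite_subset)
  have "- v \<beta> * c \<beta> \<le> (\<Prod>\<alpha>\<in>?P. v \<alpha> powr lam \<alpha>) * (\<Prod>\<alpha>\<in>?P. (c \<alpha> / lam \<alpha>) powr lam \<alpha>)"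
    using v[OF \<open>\<beta> \<in> A\<close>] v\<beta> c\<beta> by (intro neg_mult_le_mult_of_budget prod_nonneg) simp_all
  also have "\<dots> \<le> (\<Sum>\<alpha>\<in>?P. v \<alpha> * c \<alpha>)"
    using P v c pos_supp_pos sum_pos_supp_Nbeta[OF assms(1-4)]
    by (intro prod_powr_mult_prod_powr_le_sum) auto
  also have "\<dots> \<le> (\<Sum>\<alpha>\<in>?P. v \<alpha> * c \<alpha>) + (\<Sum>\<alpha>\<in>A - insert \<beta> ?P. v \<alpha> * c \<alpha>)"
    using v c by (intro add_increasing2 sum_nonneg mult_nonneg_nonneg) auto
  also have "\<dots> = (\<Sum>\<alpha>\<in>A. v \<alpha> * c \<alpha>) - v \<beta> * c \<beta>"
    using P \<open>finite A\<close> \<open>\<beta> \<in> A\<close> sum.subset_diff[of "insert \<beta> ?P" A "\<lambda>\<alpha>. v \<alpha> * c \<alpha>"]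
    by simp
  finally show ?thesis by simp
qed

lemma subset_dual_cone_AGE_cone:
  assumes "finite A" and "\<beta> \<in> A" and "lam \<in> Nbeta A \<beta>" and "lam \<beta> = -1"
  shows "{v \<in> RA A. (\<forall>\<alpha>\<in>A. v \<alpha> \<ge> 0) \<and>
       exp (sigma X (- Amul A lam)) * (\<Prod>\<alpha>\<in>pos_supp A lam. v \<alpha> powr lam \<alpha>) \<ge> v \<beta>}
    \<subseteq> dual_cone A (AGE_cone X A \<beta> lam)"
  using sum_mult_AGE_cone_nonneg[OF assms] by (auto simp: dual_cone_def)

theorem proposition4p7:
  fixes X A :: "(real^'n) set" and \<beta> :: "real^'n" and lam :: "(real^'n) \<Rightarrow> real"
  assumes "X \<noteq> {}" and "closed X" and "convex X"
    and "finite A" and "A \<noteq> {}"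
    and "\<beta> \<in> A" and "lam \<in> Nbeta A \<beta>" and "lam \<beta> = -1"
    and "sigma_finite X (- Amul A lam)"
  shows "dual_cone A (AGE_cone X A \<beta> lam) =
    {v \<in> RA A. (\<forall>\<alpha>\<in>A. v \<alpha> \<ge> 0) \<and>
       exp (sigma X (- Amul A lam)) * (\<Prod>\<alpha>\<in>pos_supp A lam. v \<alpha> powr lam \<alpha>) \<ge> v \<beta>}"
  by (intro equalityI dual_cone_AGE_cone_subset subset_dual_cone_AGE_cone assms(4,6-8))

end
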